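(* Let $a<b<c$ be elements of $\mathcal{C}_n$ and let $k$ be an integer with $n-c\le k\le n-b-1$. Then the layer $\mathcal{L}^{k}_{c}\left(\triangle^{(n)}\{a,b,c\}\right)=\{a_ib_{n-k-i}c_k:\ 0\le i\le n-k\}$ is a subsemiring of $\triangle^{(n)}\{a,b,c\}$.
   Context: $\mathcal{C}_n=\{0,1,\dots,n-1\}$ with its usual order; $\widehat{\mathcal{E}}_{\mathcal{C}_n}$ is the set of all order-preserving maps $\mathcal{C}_n\to\mathcal{C}_n$ (not required to fix $0$), a semiring with $(\alpha+\beta)(x)=\max(\alpha(x),\beta(x))$ and $(\alpha\cdot\beta)(x)=\beta(\alpha(x))$. The notation $a_ib_\ell c_k$ (with $i+\ell+k=n$) denotes the map sending $0,\dots,i-1$ to $a$, the next $\ell$ elements to $b$ and the last $k$ elements to $c$. The triangle $\triangle^{(n)}\{a,b,c\}$ is the set of $\alpha\in\widehat{\mathcal{E}}_{\mathcal{C}_n}$ with image in $\{a,b,c\}$; the layer $\mathcal{L}^{k}_{c}$ is the set of elements of the triangle mapping exactly $k$ elements of $\mathcal{C}_n$ to $c$. *)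

theory Defs
  imports Main
begin

text \<open>Elements of the chain C_n are the naturals 0..n-1. An order-preserving
  self-map of C_n is represented by a function nat => nat that is monotone on
  {0..<n}, maps {0..<n} into {0..<n}, and is 0 outside {0..<n} (extensional
  convention, so that maps are equal iff they agree on C_n).\<close>

definition OP :: "nat \<Rightarrow> (nat \<Rightarrow> nat) set" where
  "OP n = {f. (\<forall>x<n. f x < n) \<and> (\<forall>x y. x \<le> y \<longrightarrow> y < n \<longrightarrow> f x \<le> f y)
              \<and> (\<forall>x. n \<le> x \<longrightarrow> f x = 0)}"

definition op_plus :: "nat \<Rightarrow> (nat \<Rightarrow> nat) \<Rightarrow> (nat \<Rightarrow> nat) \<Rightarrow> (nat \<Rightarrow> nat)" where
  "op_plus n \<alpha> \<beta> = (\<lambda>x. if x < n then max (\<alpha> x) (\<beta> x) else 0)"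

definition op_times :: "nat \<Rightarrow> (nat \<Rightarrow> nat) \<Rightarrow> (nat \<Rightarrow> nat) \<Rightarrow> (nat \<Rightarrow> nat)" where
  "op_times n \<alpha> \<beta> = (\<lambda>x. if x < n then \<beta> (\<alpha> x) else 0)"

definition triangle :: "nat \<Rightarrow> nat \<Rightarrow> nat \<Rightarrow> nat \<Rightarrow> (nat \<Rightarrow> nat) set" where
  "triangle n a b c = {f \<in> OP n. \<forall>x<n. f x \<in> {a, b, c}}"

definition layer :: "nat \<Rightarrow> nat \<Rightarrow> nat \<Rightarrow> (nat \<Rightarrow> nat) set \<Rightarrow> (nat \<Rightarrow> nat) set" where
  "layer n k c S = {f \<in> S. card {x. x < n \<and> f x = c} = k}"

text \<open>The map a_i b_l c_k (with i + l + k = n).\<close>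
definition abc_map :: "nat \<Rightarrow> nat \<Rightarrow> nat \<Rightarrow> nat \<Rightarrow> nat \<Rightarrow> nat \<Rightarrow> nat \<Rightarrow> (nat \<Rightarrow> nat)" where
  "abc_map n a b c i l k = (\<lambda>x. if x < n then (if x < i then a else if x < i + l then b else c) else 0)"

definition subsemiring :: "nat \<Rightarrow> (nat \<Rightarrow> nat) set \<Rightarrow> (nat \<Rightarrow> nat) set \<Rightarrow> bool" where
  "subsemiring n T S \<longleftrightarrow> T \<subseteq> S \<and> T \<noteq> {} \<and>
     (\<forall>f\<in>T. \<forall>g\<in>T. op_plus n f g \<in> T \<and> op_times n f g \<in> T)"

end

theory Submission
  imports Defs
begin

text \<open>An order-preserving map into \<open>{a < b < c}\<close> is determined by the initial
  segment sent to \<open>a\<close> and the final segment sent to \<open>c\<close>; fixing the latter to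
  have \<open>k\<close> elements leaves the maps \<open>a_i b_(n-k-i) c_k\<close> (\<open>layer_map\<close> below), parametrised by the
  threshold \<open>i \<le> n - k\<close>. The sum of two of them takes the smaller threshold.
  For the product \<open>\<beta>(\<alpha> x)\<close> the hypotheses say exactly that \<open>\<beta>\<close> fixes \<open>c\<close>
  (\<open>n - k \<le> c\<close>) and sends \<open>a\<close> and \<open>b\<close> below \<open>c\<close> (\<open>b < n - k\<close>), so the
  product again has the form \<open>a_r b_(n-k-r) c_k\<close>.\<close>

lemma upward_closed_eq_atLeastLessThan:
  fixes C :: "nat set"
  assumes "C \<subseteq> {..<n}" and "\<And>x y. x \<in> C \<Longrightarrow> x \<le> y \<Longrightarrow> y < n \<Longrightarrow> y \<in> C"
  shows "C = {n - card C..<n}"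
proof (cases "C = {}")
  case False
  have "finite C" using assms(1) finite_subset by blast
  then have min_in: "Min C \<in> C" using False by simp
  have "C = {Min C..<n}"
  proof
    show "C \<subseteq> {Min C..<n}" using assms(1) \<open>finite C\<close> by auto
    show "{Min C..<n} \<subseteq> C" using assms(2)[OF min_in] by auto
  qed
  moreover have "Min C < n" using min_in assms(1) by auto
  ultimately show ?thesis by (metis card_atLeastLessThan diff_diff_cancel less_imp_le)
qed simp

lemma downward_closed_eq_lessThan:
  fixes A :: "nat set"
  assumes "A \<subseteq> {..<n}" and "\<And>x y. x \<in> A \<Longrightarrow> y \<le> x \<Longrightarrow> y \<in> A"
  shows "A = {..<card A}"
proof (cases "A = {}")
  case False
  have "finite A" using assms(1) finite_subset by blast
  then have max_in: "Max A \<in> A" using False by simp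
  have "A = {..Max A}"
  proof
    show "A \<subseteq> {..Max A}" using \<open>finite A\<close> by auto
    show "{..Max A} \<subseteq> A" using assms(2)[OF max_in] by auto
  qed
  then have "A = {..<Suc (Max A)}" by (simp add: lessThan_Suc_atMost)
  then show ?thesis by (metis card_lessThan)
qed simp

definition layer_map :: "nat \<Rightarrow> nat \<Rightarrow> nat \<Rightarrow> nat \<Rightarrow> nat \<Rightarrow> nat \<Rightarrow> nat \<Rightarrow> nat" where
  "layer_map n a b c k i = abc_map n a b c i (n - k - i) k"

lemma layer_map_apply:
  assumes "i \<le> n - k"
  shows "layer_map n a b c k i x =
    (if x < n then (if x < i then a else if x < n - k then b else c) else 0)"
  using assms by (auto simp: layer_map_def abc_map_def)

lemma layer_map_in_layer_triangle:
  assumes "a < b" "b < c" "c < n" "k \<le> n" "i \<le> n - k"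
  shows "layer_map n a b c k i \<in> layer n k c (triangle n a b c)"
proof -
  let ?g = "layer_map n a b c k i"
  have "?g \<in> OP n"
    using assms by (auto simp: OP_def layer_map_apply)
  moreover have "\<forall>x<n. ?g x \<in> {a, b, c}"
    using assms(5) by (simp add: layer_map_apply)
  moreover have "{x. x < n \<and> ?g x = c} = {n - k..<n}"
    using assms by (auto simp: layer_map_apply)
  ultimately show ?thesis
    using assms(4) by (simp add: layer_def triangle_def)
qed

lemma layer_triangle_subset_layer_maps:
  assumes "a < b" "b < c" and f: "f \<in> layer n k c (triangle n a b c)"
  shows "\<exists>i \<le> n - k. f = layer_map n a b c k i"
proof -
  have in_abc: "\<forall>x<n. f x \<in> {a, b, c}"
    and count_c: "card {x. x < n \<and> f x = c} = k"
    and mono: "\<And>x y. x \<le> y \<Longrightarrow> y < n \<Longrightarrow> f x \<le> f y"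
    and outside: "\<And>x. n \<le> x \<Longrightarrow> f x = 0"
    using f by (auto simp: layer_def triangle_def OP_def)
  have to_c: "{x. x < n \<and> f x = c} = {n - k..<n}"
  proof -
    have "{x. x < n \<and> f x = c} = {n - card {x. x < n \<and> f x = c}..<n}"
    proof (rule upward_closed_eq_atLeastLessThan)
      fix x y assume "x \<in> {x. x < n \<and> f x = c}" "x \<le> y" "y < n"
      then show "y \<in> {x. x < n \<and> f x = c}"
        using mono[of x y] in_abc assms(1,2) by fastforce
    qed auto
    then show ?thesis using count_c by simp
  qed
  define i where "i = card {x. x < n \<and> f x = a}"
  have to_a: "{x. x < n \<and> f x = a} = {..<i}"
    unfolding i_def
  proof (rule downward_closed_eq_lessThan)
    fix x y assume "x \<in> {x. x < n \<and> f x = a}" "y \<le> x"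
    then show "y \<in> {x. x < n \<and> f x = a}"
      using mono[of y x] in_abc[rule_format, of y] assms(1,2) by fastforce
  qed auto
  have "i \<le> n - k"
  proof (rule ccontr)
    assume "\<not> i \<le> n - k"
    moreover have "i \<le> n"
      unfolding i_def using card_mono[of "{..<n}" "{x. x < n \<and> f x = a}"] by auto
    ultimately have "n - k \<in> {x. x < n \<and> f x = a}" "n - k \<in> {x. x < n \<and> f x = c}"
      unfolding to_a to_c by auto
    then have "f (n - k) = a" "f (n - k) = c" by simp_all
    then show False using assms(1,2) by simp
  qed
  moreover have "f = layer_map n a b c k i"
  proof
    fix x
    show "f x = layer_map n a b c k i x"
    proof (cases "x < n")
      case True
      then have "f x = a \<longleftrightarrow> x < i" "f x = c \<longleftrightarrow> n - k \<le> x"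
        using to_a[unfolded set_eq_iff, rule_format, of x]
          to_c[unfolded set_eq_iff, rule_format, of x] by simp_all
      then show ?thesis using True in_abc \<open>i \<le> n - k\<close> by (auto simp: layer_map_apply)
    qed (simp add: outside layer_map_apply \<open>i \<le> n - k\<close>)
  qed
  ultimately show ?thesis by blast
qed

lemma layer_triangle_eq_layer_maps:
  assumes "a < b" "b < c" "c < n" "k \<le> n"
  shows "layer n k c (triangle n a b c) = {layer_map n a b c k i | i. i \<le> n - k}"
  using layer_map_in_layer_triangle[OF assms] layer_triangle_subset_layer_maps[OF assms(1,2)]
  by blast

lemma op_plus_layer_map:
  assumes "a < b" "b < c" "i \<le> n - k" "j \<le> n - k"
  shows "op_plus n (layer_map n a b c k i) (layer_map n a b c k j)
    = layer_map n a b c k (min i j)"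
  using assms by (auto simp: fun_eq_iff op_plus_def layer_map_apply min_def)

lemma op_times_layer_map:
  assumes "a < b" "b < c" "c < n" "n - c \<le> k" "k + b + 1 \<le> n" "i \<le> n - k" "j \<le> n - k"
  defines "r \<equiv> if b < j then n - k else if a < j then i else 0"
  shows "op_times n (layer_map n a b c k i) (layer_map n a b c k j)
    = layer_map n a b c k r"
proof -
  have "r \<le> n - k" using assms(6,7) by (simp add: r_def)
  then show ?thesis
    using assms by (auto simp: fun_eq_iff op_times_def layer_map_apply)
qed

theorem proposition29:
  fixes n a b c k :: nat
  assumes "a < b" and "b < c" and "c < n"
    and "n - c \<le> k" and "k + b + 1 \<le> n"
  shows "layer n k c (triangle n a b c) = {abc_map n a b c i (n - k - i) k | i. i \<le> n - k}
       \<and> subsemiring n (layer n k c (triangle n a b c)) (triangle n a b c)"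
proof -
  let ?L = "layer n k c (triangle n a b c)"
  have "k \<le> n" using assms(5) by simp
  note eq = layer_triangle_eq_layer_maps[OF assms(1-3) this]
  have in_L: "layer_map n a b c k i \<in> ?L" if "i \<le> n - k" for i
    using layer_map_in_layer_triangle[OF assms(1-3) \<open>k \<le> n\<close> that] .
  have closed: "op_plus n f g \<in> ?L \<and> op_times n f g \<in> ?L" if "f \<in> ?L" "g \<in> ?L" for f g
  proof -
    from that obtain i j where ij: "i \<le> n - k" "j \<le> n - k"
      and fg: "f = layer_map n a b c k i" "g = layer_map n a b c k j"
      unfolding eq by (auto simp only: mem_Collect_eq)
    have "op_plus n f g \<in> ?L"
      unfolding fg op_plus_layer_map[OF assms(1,2) ij] using ij by (intro in_L) simp
    moreover have "op_times n f g \<in> ?L"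
      unfolding fg op_times_layer_map[OF assms ij] using ij by (intro in_L) simp
    ultimately show ?thesis ..
  qed
  have "?L \<noteq> {}" using eq by auto
  then have "subsemiring n ?L (triangle n a b c)"
    using closed by (auto simp: subsemiring_def layer_def)
  with eq show ?thesis unfolding layer_map_def by simp
qed

end
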